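(* Let $f:\mathbb{R}^n\to\mathbb{R}^n$ be locally Lipschitz, and let $V_1,V_2\in C^1(\mathbb{R}^n)$, continuous $N_1,N_2:\mathbb{R}^n\to[0,\infty)$, and continuous $h:[0,\infty)\to[0,\infty)$ with $h(0)=0$ and $\sup_{r>0}h(r)/r<\infty$ satisfy $\nabla V_1\cdot f\le -N_1$ and $\nabla V_2\cdot f\le -N_2+h(N_1)$ on $\mathbb{R}^n$. Assume every solution is defined and bounded on $[0,\infty)$ and that along every solution the maps $t\mapsto N_i(x(t))$ are uniformly continuous. If $E:=\{x:N_1(x)=0,\ N_2(x)=0\}=\{x^\ast\}$ is a singleton, then $x^\ast$ is a globally asymptotically stable equilibrium of $\dot x=f(x)$.
   Context: $x^\ast$ is globally asymptotically stable if it is Lyapunov stable (for every neighborhood $U$ of $x^\ast$ there is a neighborhood $V\subset U$ such that solutions starting in $V$ remain in $U$ for all $t\ge0$) and every solution satisfies $x(t)\to x^\ast$ as $t\to\infty$. *)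

theory Defs
  imports "HOL-Analysis.Analysis"
begin

definition is_solution :: "('a::real_normed_vector \<Rightarrow> 'a) \<Rightarrow> (real \<Rightarrow> 'a) \<Rightarrow> bool" where
  "is_solution f x \<longleftrightarrow> (\<forall>t\<ge>0. (x has_vector_derivative f (x t)) (at t within {0..}))"

definition lyapunov_stable :: "('a::real_normed_vector \<Rightarrow> 'a) \<Rightarrow> 'a \<Rightarrow> bool" where
  "lyapunov_stable f xs \<longleftrightarrow>
     (\<forall>U. open U \<and> xs \<in> U \<longrightarrow>
        (\<exists>V. open V \<and> xs \<in> V \<and> V \<subseteq> U \<and>
           (\<forall>x. is_solution f x \<and> x 0 \<in> V \<longrightarrow> (\<forall>t\<ge>0. x t \<in> U))))"

definition globally_asymptotically_stable :: "('a::real_normed_vector \<Rightarrow> 'a) \<Rightarrow> 'a \<Rightarrow> bool" where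
  "globally_asymptotically_stable f xs \<longleftrightarrow>
     lyapunov_stable f xs \<and> (\<forall>x. is_solution f x \<longrightarrow> (x \<longlongrightarrow> xs) at_top)"

end

theory Submission
  imports Defs
begin

text \<open>Since \<open>h\<close> grows at most linearly, \<open>h r \<le> c r\<close>, the combination \<open>W = (c + 1) V\<^sub>1 + V\<^sub>2\<close>
  satisfies \<open>\<nabla>W \<cdot> f \<le> -N\<close> with \<open>N = N\<^sub>1 + N\<^sub>2\<close>, and \<open>N\<close> vanishes exactly at \<open>x\<^sup>*\<close>.
  Along a solution \<open>W\<close> is nonincreasing and, the solution being bounded, bounded below;
  Barbalat's lemma (this is where uniform continuity of \<open>N \<circ> x\<close> enters) gives \<open>N (x t) \<rightarrow> 0\<close>,
  and compactness turns this into \<open>x t \<rightarrow> x\<^sup>*\<close>. Hence \<open>W (x\<^sup>*) \<le> W\<close> along every solution, and if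
  \<open>W y = W (x\<^sup>*)\<close> then \<open>W\<close> is constant along the solution from \<open>y\<close>, forcing \<open>N = 0\<close> on it and so
  \<open>y = x\<^sup>*\<close>. A strict minimum of a Lyapunov function yields stability by the usual sphere argument,
  and the solution through \<open>x\<^sup>*\<close> is constant, so \<open>f x\<^sup>* = 0\<close>.\<close>

lemma at_within_Ici_nontrivial:
  fixes a t :: real
  assumes "a \<le> t"
  shows "at t within {a..} \<noteq> bot"
proof -
  have "t islimpt {a..<t + 1}" using assms by simp
  then have "t islimpt {a..}" by (rule islimpt_subset) auto
  then show ?thesis by (simp add: trivial_limit_within)
qed

lemma has_vector_derivative_const_on_Ici:
  fixes g :: "real \<Rightarrow> 'a::real_normed_vector"
  assumes const: "\<And>s. a \<le> s \<Longrightarrow> g s = c"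
    and deriv: "(g has_vector_derivative D) (at t within {a..})" and t: "a \<le> t"
  shows "D = 0"
proof -
  have "(g has_vector_derivative 0) (at t within {a..})"
    by (rule has_vector_derivative_transform_within[where d = 1 and f = "\<lambda>_. c"])
       (use const t in auto)
  then show ?thesis
    using vector_derivative_unique_within[OF at_within_Ici_nontrivial[OF t] deriv] by simp
qed

lemma is_solution_continuous_on:
  assumes "is_solution f x"
  shows "continuous_on {0..} x"
  unfolding continuous_on_eq_continuous_within
  using assms unfolding is_solution_def by (auto intro: has_vector_derivative_continuous)

lemma has_real_derivative_along_solution:
  fixes W :: "'a::real_inner \<Rightarrow> real"
  assumes W: "\<And>y. (W has_derivative (\<lambda>v. G y \<bullet> v)) (at y)"
    and x: "is_solution f x" and t: "0 \<le> t"
  shows "((\<lambda>t. W (x t)) has_real_derivative (G (x t) \<bullet> f (x t))) (at t within {0..})"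
proof -
  have "(x has_derivative (\<lambda>s. s *\<^sub>R f (x t))) (at t within {0..})"
    using x t unfolding is_solution_def has_vector_derivative_def by auto
  from diff_chain_within[OF this has_derivative_subset[OF W]]
  have "((W \<circ> x) has_derivative (\<lambda>s. G (x t) \<bullet> (s *\<^sub>R f (x t)))) (at t within {0..})"
    by (simp add: o_def)
  moreover have "(\<lambda>s. G (x t) \<bullet> (s *\<^sub>R f (x t))) = (*) (G (x t) \<bullet> f (x t))"
    by (auto simp: fun_eq_iff)
  ultimately show ?thesis
    unfolding has_field_derivative_def o_def by simp
qed

lemma decrease_along_solution:
  fixes W :: "'a::real_inner \<Rightarrow> real"
  assumes W: "\<And>y. (W has_derivative (\<lambda>v. G y \<bullet> v)) (at y)"
    and x: "is_solution f x" and decr: "\<And>y. G y \<bullet> f y \<le> - N y"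
    and "0 \<le> a" "a < b"
  shows "\<exists>z\<in>{a<..<b}. W (x b) - W (x a) \<le> - (b - a) * N (x z)"
proof -
  have "\<exists>z\<in>{a<..<b}. W (x b) - W (x a) = (G (x z) \<bullet> f (x z)) * (b - a)"
  proof (rule mvt_simple[OF \<open>a < b\<close>])
    fix t assume "a \<le> t" "t \<le> b"
    with has_real_derivative_along_solution[OF W x, of t] \<open>0 \<le> a\<close>
    have "((\<lambda>t. W (x t)) has_real_derivative (G (x t) \<bullet> f (x t))) (at t within {a..b})"
      by (auto intro: has_field_derivative_subset)
    then show "((\<lambda>t. W (x t)) has_derivative (\<lambda>s. (G (x t) \<bullet> f (x t)) * s)) (at t within {a..b})"
      by (simp add: has_field_derivative_def)
  qed
  then obtain z where z: "z \<in> {a<..<b}" "W (x b) - W (x a) = (G (x z) \<bullet> f (x z)) * (b - a)"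
    by blast
  have "(G (x z) \<bullet> f (x z)) * (b - a) \<le> - N (x z) * (b - a)"
    using decr[of "x z"] \<open>a < b\<close> by (intro mult_right_mono) auto
  with z show ?thesis by (intro bexI[of _ z]) (auto simp: algebra_simps)
qed

lemma decrease_imp_antitone:
  fixes g n :: "real \<Rightarrow> real"
  assumes nonneg: "\<And>t. 0 \<le> t \<Longrightarrow> 0 \<le> n t"
    and decr: "\<And>a b. 0 \<le> a \<Longrightarrow> a < b \<Longrightarrow> \<exists>z\<in>{a<..<b}. g b - g a \<le> - (b - a) * n z"
    and "0 \<le> a" "a \<le> b"
  shows "g b \<le> g a"
proof (cases "a = b")
  case False
  with \<open>a \<le> b\<close> have "a < b" by simp
  then obtain z where z: "z \<in> {a<..<b}" "g b - g a \<le> - (b - a) * n z"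
    using decr \<open>0 \<le> a\<close> by blast
  have "0 \<le> (b - a) * n z" using nonneg[of z] z(1) \<open>0 \<le> a\<close> by auto
  with z(2) show ?thesis by linarith
qed simp

text \<open>Barbalat's lemma, with the derivative bound \<open>g' \<le> -n\<close> in mean-value form.\<close>

lemma barbalat:
  fixes g n :: "real \<Rightarrow> real"
  assumes nonneg: "\<And>t. 0 \<le> t \<Longrightarrow> 0 \<le> n t"
    and uc: "uniformly_continuous_on {0..} n"
    and bdd: "bdd_below (g ` {0..})"
    and decr: "\<And>a b. 0 \<le> a \<Longrightarrow> a < b \<Longrightarrow> \<exists>z\<in>{a<..<b}. g b - g a \<le> - (b - a) * n z"
  shows "(n \<longlongrightarrow> 0) at_top"
proof (rule tendstoI)
  fix e :: real assume e: "e > 0"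
  obtain d where d: "d > 0"
    and dd: "\<And>s t. 0 \<le> s \<Longrightarrow> 0 \<le> t \<Longrightarrow> dist s t < d \<Longrightarrow> dist (n s) (n t) < e / 2"
    using uc e unfolding uniformly_continuous_on_def by (metis atLeast_iff half_gt_zero)
  define L where "L = Inf (g ` {0..})"
  have L_le: "L \<le> g t" if "0 \<le> t" for t
    unfolding L_def using bdd that by (auto intro: cInf_lower)
  obtain T where T: "0 \<le> T" "g T < L + (d/2) * (e/2)"
    using cInf_lessD[of "g ` {0..}" "L + (d/2) * (e/2)"] e d unfolding L_def by auto
  txt \<open>Past \<open>T\<close>, a value \<open>n t \<ge> e\<close> would keep \<open>n > e/2\<close> on \<open>[t, t + d/2]\<close>, so \<open>g\<close> would
    drop by more than \<open>e d/4\<close> there, below its infimum.\<close>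
  have "n t < e" if t: "T \<le> t" for t
  proof (rule ccontr)
    assume "\<not> n t < e"
    obtain z where z: "z \<in> {t<..<t + d/2}" "g (t + d/2) - g t \<le> - (d/2) * n z"
      using decr[of t "t + d/2"] t T d by auto
    then have "dist (n z) (n t) < e / 2"
      using dd[of z t] t T d by (auto simp: dist_real_def)
    with \<open>\<not> n t < e\<close> have "e/2 < n z"
      unfolding dist_real_def by linarith
    then have "(d/2) * (e/2) < (d/2) * n z"
      using d by simp
    moreover have "g t \<le> g T"
      using decrease_imp_antitone[OF nonneg decr] T t by simp
    moreover have "L \<le> g (t + d/2)" using L_le t T d by simp
    ultimately show False using z(2) T by linarith
  qed
  then show "\<forall>\<^sub>F t in at_top. dist (n t) 0 < e"
    unfolding eventually_at_top_linorder
    using nonneg T by (intro exI[of _ T]) (auto simp: dist_real_def)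
qed

lemma tendsto_unique_zero_if_bounded:
  fixes x :: "real \<Rightarrow> 'a::euclidean_space" and N :: "'a \<Rightarrow> real"
  assumes N_cont: "continuous_on UNIV N" and N_nonneg: "\<And>y. 0 \<le> N y"
    and N_eq_0_iff: "\<And>y. N y = 0 \<longleftrightarrow> y = xs"
    and bounded: "bounded (x ` {0..})" and lim: "((\<lambda>t. N (x t)) \<longlongrightarrow> 0) at_top"
  shows "(x \<longlongrightarrow> xs) at_top"
proof (rule ccontr)
  assume "\<not> (x \<longlongrightarrow> xs) at_top"
  then obtain e where e: "e > 0" and far: "\<And>T. \<exists>t\<ge>T. e \<le> dist (x t) xs"
    unfolding tendsto_iff eventually_at_top_linorder by (meson not_le)
  obtain R where R: "\<And>t. 0 \<le> t \<Longrightarrow> norm (x t) \<le> R"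
    using bounded unfolding bounded_iff by auto
  define K where "K = cball 0 R \<inter> {y. e \<le> dist y xs}"
  have far_in_K: "x t \<in> K" if "0 \<le> t" "e \<le> dist (x t) xs" for t
    using that R by (auto simp: K_def)
  have "compact K" unfolding K_def
    by (intro compact_Int_closed compact_cball closed_Collect_le continuous_intros)
  moreover obtain t0 where "0 \<le> t0" "e \<le> dist (x t0) xs" using far[of 0] by blast
  then have "K \<noteq> {}" using far_in_K by blast
  ultimately obtain y0 where y0: "y0 \<in> K" "\<And>y. y \<in> K \<Longrightarrow> N y0 \<le> N y"
    using continuous_attains_inf continuous_on_subset[OF N_cont subset_UNIV] by metis
  have "y0 \<noteq> xs" using y0(1) e by (auto simp: K_def)
  then have "0 < N y0" using N_eq_0_iff[of y0] N_nonneg[of y0] by linarith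
  with lim have "\<forall>\<^sub>F t in at_top. dist (N (x t)) 0 < N y0" by (rule tendstoD)
  then obtain T where T: "\<And>t. T \<le> t \<Longrightarrow> N (x t) < N y0"
    unfolding eventually_at_top_linorder dist_real_def using N_nonneg by auto
  obtain t where t: "max T 0 \<le> t" "e \<le> dist (x t) xs" using far by blast
  then have "N y0 \<le> N (x t)" using y0(2) far_in_K by simp
  with T[of t] t(1) show False by simp
qed

lemma linear_bound_of_bdd_above_quotient:
  fixes h :: "real \<Rightarrow> real"
  assumes "h 0 = 0" and "bdd_above ((\<lambda>r. h r / r) ` {0<..})"
  obtains c where "0 \<le> c" "\<And>r. 0 \<le> r \<Longrightarrow> h r \<le> c * r"
proof -
  obtain B where B: "\<And>r. 0 < r \<Longrightarrow> h r / r \<le> B"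
    using assms(2) unfolding bdd_above_def by auto
  have "h r \<le> max B 0 * r" if "0 \<le> r" for r
  proof (cases "r = 0")
    case False
    with that B[of r] have "h r / r \<le> max B 0" by simp
    with False that show ?thesis by (simp add: divide_le_eq)
  qed (simp add: assms(1))
  then show ?thesis using that[of "max B 0"] by simp
qed

locale strict_lyapunov =
  fixes f :: "'a::euclidean_space \<Rightarrow> 'a" and W :: "'a \<Rightarrow> real" and G :: "'a \<Rightarrow> 'a"
    and N :: "'a \<Rightarrow> real" and xs :: 'a
  assumes W_has_derivative: "\<And>y. (W has_derivative (\<lambda>v. G y \<bullet> v)) (at y)"
    and W_decrease: "\<And>y. G y \<bullet> f y \<le> - N y"
    and N_cont: "continuous_on UNIV N"
    and N_nonneg: "\<And>y. 0 \<le> N y"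
    and N_eq_0_iff: "\<And>y. N y = 0 \<longleftrightarrow> y = xs"
    and solution_exists: "\<And>x0. \<exists>x. is_solution f x \<and> x 0 = x0"
    and solution_bounded: "\<And>x. is_solution f x \<Longrightarrow> bounded (x ` {0..})"
    and N_solution_uniformly_continuous:
      "\<And>x. is_solution f x \<Longrightarrow> uniformly_continuous_on {0..} (\<lambda>t. N (x t))"
begin

lemma isCont_W: "isCont W y"
  using has_derivative_continuous[OF W_has_derivative] .

lemma continuous_on_W: "continuous_on S W"
  by (intro continuous_at_imp_continuous_on ballI isCont_W)

lemma W_solution_decrease:
  assumes "is_solution f x" "0 \<le> a" "a < b"
  shows "\<exists>z\<in>{a<..<b}. W (x b) - W (x a) \<le> - (b - a) * N (x z)"
  using decrease_along_solution[OF W_has_derivative assms(1) W_decrease assms(2,3)] .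

lemma W_solution_antimono:
  assumes "is_solution f x" "0 \<le> a" "a \<le> b"
  shows "W (x b) \<le> W (x a)"
  using decrease_imp_antitone[where n = "\<lambda>t. N (x t)" and g = "\<lambda>t. W (x t)"]
    W_solution_decrease[OF assms(1)] N_nonneg assms(2,3) by blast

lemma W_solution_bdd_below:
  assumes "is_solution f x"
  shows "bdd_below ((\<lambda>t. W (x t)) ` {0..})"
proof -
  have "compact (W ` closure (x ` {0..}))"
    using solution_bounded[OF assms]
    by (intro compact_continuous_image continuous_on_W) simp
  then have "bdd_below (W ` closure (x ` {0..}))"
    by (intro bounded_imp_bdd_below compact_imp_bounded)
  then show ?thesis
    by (rule bdd_below_mono) (auto intro: closure_subset[THEN subsetD])
qed

lemma solution_tendsto:
  assumes x: "is_solution f x"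
  shows "(x \<longlongrightarrow> xs) at_top"
proof -
  have "((\<lambda>t. N (x t)) \<longlongrightarrow> 0) at_top"
    using barbalat[OF _ N_solution_uniformly_continuous[OF x] W_solution_bdd_below[OF x]
        W_solution_decrease[OF x]] N_nonneg by blast
  then show ?thesis
    using tendsto_unique_zero_if_bounded[OF N_cont N_nonneg N_eq_0_iff solution_bounded[OF x]]
    by blast
qed

lemma W_min_along_solution:
  assumes x: "is_solution f x" and t: "0 \<le> t"
  shows "W xs \<le> W (x t)"
proof (rule tendsto_upperbound)
  show "((\<lambda>s. W (x s)) \<longlongrightarrow> W xs) at_top"
    by (rule isCont_tendsto_compose[OF isCont_W solution_tendsto[OF x]])
  show "\<forall>\<^sub>F s in at_top. W (x s) \<le> W (x t)"
    unfolding eventually_at_top_linorder using W_solution_antimono[OF x t] by blast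
qed simp

text \<open>If \<open>W\<close> starts at its minimum, it stays there; then \<open>W \<circ> x\<close> has derivative \<open>0\<close>,
  which by \<open>G \<cdot> f \<le> -N \<le> 0\<close> forces \<open>N (x t) = 0\<close>.\<close>

lemma solution_eq_if_W_start_le:
  assumes x: "is_solution f x" and start: "W (x 0) \<le> W xs" and t: "0 \<le> t"
  shows "x t = xs"
proof -
  have const: "W (x s) = W (x 0)" if "0 \<le> s" for s
    using W_solution_antimono[OF x order_refl that] W_min_along_solution[OF x that] start
    by linarith
  have deriv: "((\<lambda>s. W (x s)) has_vector_derivative (G (x t) \<bullet> f (x t))) (at t within {0..})"
    using has_real_derivative_along_solution[OF W_has_derivative x t]
    by (simp add: has_real_derivative_iff_has_vector_derivative)
  have "G (x t) \<bullet> f (x t) = 0"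
    by (rule has_vector_derivative_const_on_Ici[where g = "\<lambda>s. W (x s)", OF const deriv t])
  then have "N (x t) = 0" using W_decrease[of "x t"] N_nonneg[of "x t"] by linarith
  then show ?thesis using N_eq_0_iff by simp
qed

lemma W_strict_min:
  assumes "y \<noteq> xs"
  shows "W xs < W y"
proof (rule ccontr)
  assume "\<not> W xs < W y"
  obtain x where x: "is_solution f x" "x 0 = y" using solution_exists by blast
  with \<open>\<not> W xs < W y\<close> have "x 0 = xs" by (intro solution_eq_if_W_start_le) auto
  with x assms show False by simp
qed

lemma equilibrium: "f xs = 0"
proof -
  obtain x where x: "is_solution f x" "x 0 = xs" using solution_exists by blast
  then have const: "x t = xs" if "0 \<le> t" for t
    using solution_eq_if_W_start_le that by simp
  have "(x has_vector_derivative f (x 0)) (at 0 within {0..})"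
    using x(1) unfolding is_solution_def by simp
  then show ?thesis
    using has_vector_derivative_const_on_Ici[OF const] x(2) by simp
qed

lemma W_gap_on_sphere:
  assumes "0 < r"
  obtains m where "0 < m" "\<And>y. y \<in> sphere xs r \<Longrightarrow> W xs + m \<le> W y"
proof (cases "sphere xs r = {}")
  case False
  then obtain y0 where y0: "y0 \<in> sphere xs r" "\<And>y. y \<in> sphere xs r \<Longrightarrow> W y0 \<le> W y"
    using continuous_attains_inf[OF compact_sphere False continuous_on_W] by blast
  have "y0 \<noteq> xs" using y0(1) assms by auto
  then show ?thesis
    using that[of "W y0 - W xs"] W_strict_min y0(2) by force
qed (use that[of 1] in auto)

lemma solution_stays_in_ball:
  assumes x: "is_solution f x" and x0: "dist xs (x 0) < r"
    and below: "\<And>y. y \<in> sphere xs r \<Longrightarrow> W (x 0) < W y" and t: "0 \<le> t"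
  shows "dist xs (x t) < r"
proof (rule ccontr)
  assume "\<not> dist xs (x t) < r"
  moreover have "continuous_on {0..t} (\<lambda>s. dist xs (x s))"
    by (intro continuous_intros continuous_on_subset[OF is_solution_continuous_on[OF x]]) auto
  ultimately obtain s where s: "0 \<le> s" "s \<le> t" "dist xs (x s) = r"
    using IVT'[of "\<lambda>s. dist xs (x s)" 0 r t] x0 t by auto
  then have "W (x 0) < W (x s)" using below by simp
  with W_solution_antimono[OF x order_refl s(1)] show False by simp
qed

lemma lyapunov_stable: "lyapunov_stable f xs"
  unfolding lyapunov_stable_def
proof (intro allI impI)
  fix U assume "open U \<and> xs \<in> U"
  then obtain r where r: "0 < r" "cball xs r \<subseteq> U" using open_contains_cball by blast
  obtain m where m: "0 < m" "\<And>y. y \<in> sphere xs r \<Longrightarrow> W xs + m \<le> W y"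
    using W_gap_on_sphere[OF r(1)] by blast
  obtain d where d: "0 < d" "\<And>y. dist y xs < d \<Longrightarrow> dist (W y) (W xs) < m"
    using isCont_W[of xs] m(1) unfolding continuous_at_eps_delta by blast
  have "x t \<in> U" if x: "is_solution f x" and x0: "x 0 \<in> ball xs (min d r)" and t: "0 \<le> t" for x t
  proof -
    have "W (x 0) < W xs + m"
      using d(2)[of "x 0"] x0 by (simp add: dist_commute dist_real_def)
    with m(2) have "dist xs (x t) < r"
      using solution_stays_in_ball[OF x _ _ t] x0 by fastforce
    with r(2) show ?thesis by auto
  qed
  then show "\<exists>V. open V \<and> xs \<in> V \<and> V \<subseteq> U \<and>
      (\<forall>x. is_solution f x \<and> x 0 \<in> V \<longrightarrow> (\<forall>t\<ge>0. x t \<in> U))"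
    using d(1) r by (intro exI[of _ "ball xs (min d r)"]) auto
qed

theorem globally_asymptotically_stable: "globally_asymptotically_stable f xs"
  unfolding globally_asymptotically_stable_def using lyapunov_stable solution_tendsto by blast

end

theorem corollary2p8:
  fixes f :: "real^'n \<Rightarrow> real^'n"
    and V1 V2 :: "real^'n \<Rightarrow> real"
    and gradV1 gradV2 :: "real^'n \<Rightarrow> real^'n"
    and N1 N2 :: "real^'n \<Rightarrow> real"
    and h :: "real \<Rightarrow> real"
    and xs :: "real^'n"
  assumes f_loclip: "local_lipschitz (UNIV::real set) (UNIV::(real^'n) set) (\<lambda>_. f)"
    and V1_C1: "\<And>x. (V1 has_derivative (\<lambda>v. gradV1 x \<bullet> v)) (at x)" "continuous_on UNIV gradV1"
    and V2_C1: "\<And>x. (V2 has_derivative (\<lambda>v. gradV2 x \<bullet> v)) (at x)" "continuous_on UNIV gradV2"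
    and N1_cont: "continuous_on UNIV N1" and N1_nonneg: "\<And>x. N1 x \<ge> 0"
    and N2_cont: "continuous_on UNIV N2" and N2_nonneg: "\<And>x. N2 x \<ge> 0"
    and h_cont: "continuous_on {0..} h" and h_nonneg: "\<And>r. r \<ge> 0 \<Longrightarrow> h r \<ge> 0"
    and h_zero: "h 0 = 0"
    and h_lin: "bdd_above ((\<lambda>r. h r / r) ` {0<..})"
    and dV1: "\<And>x. gradV1 x \<bullet> f x \<le> - N1 x"
    and dV2: "\<And>x. gradV2 x \<bullet> f x \<le> - N2 x + h (N1 x)"
    and complete: "\<And>x0. \<exists>x. is_solution f x \<and> x 0 = x0"
    and bounded_sol: "\<And>x. is_solution f x \<Longrightarrow> bounded (x ` {0..})"
    and unif_N1: "\<And>x. is_solution f x \<Longrightarrow> uniformly_continuous_on {0..} (\<lambda>t. N1 (x t))"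
    and unif_N2: "\<And>x. is_solution f x \<Longrightarrow> uniformly_continuous_on {0..} (\<lambda>t. N2 (x t))"
    and E_single: "{x. N1 x = 0 \<and> N2 x = 0} = {xs}"
  shows "f xs = 0 \<and> globally_asymptotically_stable f xs"
proof -
  obtain c where c: "0 \<le> c" "\<And>r. 0 \<le> r \<Longrightarrow> h r \<le> c * r"
    using linear_bound_of_bdd_above_quotient[OF h_zero h_lin] by blast
  interpret strict_lyapunov f "\<lambda>y. (c + 1) * V1 y + V2 y" "\<lambda>y. (c + 1) *\<^sub>R gradV1 y + gradV2 y"
    "\<lambda>y. N1 y + N2 y" xs
  proof
    show "((\<lambda>y. (c + 1) * V1 y + V2 y) has_derivative
        (\<lambda>v. ((c + 1) *\<^sub>R gradV1 y + gradV2 y) \<bullet> v)) (at y)" for y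
      using has_derivative_add[OF has_derivative_mult_right[OF V1_C1(1)] V2_C1(1), of "c + 1" y]
      by (simp add: inner_add_left algebra_simps)
    show "((c + 1) *\<^sub>R gradV1 y + gradV2 y) \<bullet> f y \<le> - (N1 y + N2 y)" for y
    proof -
      have "(c + 1) * (gradV1 y \<bullet> f y) \<le> (c + 1) * - N1 y"
        using dV1[of y] c(1) by (intro mult_left_mono) auto
      then show ?thesis
        using dV2[of y] c(2)[OF N1_nonneg[of y]] by (simp add: inner_add_left algebra_simps)
    qed
    show "continuous_on UNIV (\<lambda>y. N1 y + N2 y)"
      using N1_cont N2_cont by (rule continuous_on_add)
    show "0 \<le> N1 y + N2 y" for y
      using N1_nonneg N2_nonneg by (rule add_nonneg_nonneg)
    show "N1 y + N2 y = 0 \<longleftrightarrow> y = xs" for y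
      using E_single N1_nonneg[of y] N2_nonneg[of y] by (auto simp: add_nonneg_eq_0_iff)
    show "uniformly_continuous_on {0..} (\<lambda>t. N1 (x t) + N2 (x t))" if "is_solution f x" for x
      using unif_N1[OF that] unif_N2[OF that] by (rule uniformly_continuous_on_add)
  qed (use complete bounded_sol in blast)+
  show ?thesis using equilibrium globally_asymptotically_stable by blast
qed

end
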